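(* For $n,k,f\geqslant 0$ let $\mathfrak{j}_{n,k,f}$ be the number of words $\omega$ of length $n$ over the alphabet $\{0,\dots,k-1\}$ avoiding both $010$ and $110$ with $\mathrm{forb}(\omega,\{010,110\})=f$ (the empty word has $\mathrm{forb}=0$), and let $\mathfrak{k}_{n,k}=\sum_{f}\mathfrak{j}_{n,k,f}$ be the number of words of length $n$ over $\{0,\dots,k-1\}$ avoiding $010$ and $110$. Then for all $n\geqslant1$ and $k,f\geqslant0$, $$\mathfrak{j}_{n,k,f}=\sum_{p=1}^{n}\sum_{i=0}^{f-1}\sum_{m=0}^{k-1}\mathfrak{j}_{p-1,m,i}\cdot\Bigl(\mathfrak{j}_{n-p,\,m-i,\,f-i-1}+\delta_{f,m+1}\sum_{\ell=0}^{n-p-1}\mathfrak{k}_{\ell,\,m-i}\Bigr).$$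
   Context: $\delta_{a,b}$ is the Kronecker delta. A word contains a pattern $p$ if some subsequence is order-isomorphic to $p$; otherwise it avoids $p$. Avoiding $010$: no $i<j<l$ with $\omega_i=\omega_l<\omega_j$. Avoiding $110$: no $i<j<l$ with $\omega_i=\omega_j>\omega_l$. For a nonempty sequence $\omega$ avoiding a set of patterns $P$, a value $v\in\{0,\dots,\max(\omega)\}$ is forbidden if $\omega$ followed by $M$ and then $v$ contains some pattern of $P$, where $M>\max(\omega)$; $\mathrm{forb}(\omega,P)$ is the number of forbidden values. *)

theory Defs
  imports Main "HOL-Library.Sublist"
begin

definition order_iso :: "nat list \<Rightarrow> nat list \<Rightarrow> bool" where
  "order_iso u p \<longleftrightarrow> length u = length p \<and>
     (\<forall>a < length p. \<forall>b < length p. (u ! a < u ! b \<longleftrightarrow> p ! a < p ! b))"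

definition contains :: "nat list \<Rightarrow> nat list \<Rightarrow> bool" where
  "contains w p \<longleftrightarrow> (\<exists>u. subseq u w \<and> order_iso u p)"

definition avoids :: "nat list \<Rightarrow> nat list \<Rightarrow> bool" where
  "avoids w p \<longleftrightarrow> \<not> contains w p"

text \<open>forb(w,P); we take M = max(w)+1 (any M > max(w) gives the same result);
the empty word has forb = 0.\<close>
definition forb :: "nat list \<Rightarrow> nat list set \<Rightarrow> nat" where
  "forb w P = (if w = [] then 0 else
     card {v. v \<le> Max (set w) \<and> (\<exists>p\<in>P. contains (w @ [Suc (Max (set w)), v]) p)})"

definition P010_110 :: "nat list set" where
  "P010_110 = {[0,1,0], [1,1,0]}"

definition jj :: "nat \<Rightarrow> nat \<Rightarrow> nat \<Rightarrow> nat" where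
  "jj n k f = card {w. length w = n \<and> set w \<subseteq> {..<k} \<and>
      avoids w [0,1,0] \<and> avoids w [1,1,0] \<and> forb w P010_110 = f}"

definition kk :: "nat \<Rightarrow> nat \<Rightarrow> nat" where
  "kk n k = card {w. length w = n \<and> set w \<subseteq> {..<k} \<and>
      avoids w [0,1,0] \<and> avoids w [1,1,0]}"

end

theory Submission
  imports Defs
begin

text \<open>
  Split a nonempty word at the first occurrence of its largest letter m, as w = a m b with
  a < m and b \<le> m. Appending a new maximum M and then v to an avoiding word creates a 010
  exactly when v occurs in the word, and a 110 exactly when v lies below a letter occurring
  twice; so forb counts the set forbidden w of such values. The word a m b avoids 010 and 110 iff a and b
  do, no letter of b is forbidden for a, and after the first m in b only m follows.

  If m does not occur in b, the forbidden values of w are those of a, then m, then those of b,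
  and b is an arbitrary avoiding word over the m - i letters below m not forbidden for a
  (i = forb a). Counts depend only on the order type of the alphabet, which gives
  j(n-p, m-i, f-i-1). If m occurs in b, every value up to m is forbidden, so f = m + 1, and
  b = g m\<dots>m with g an avoiding word over the same m - i letters, which gives the sum of
  k(l, m-i).
\<close>

section \<open>Patterns as subsequences\<close>

lemma order_iso_010: "order_iso u [0,1,0] \<longleftrightarrow> (\<exists>x y. u = [x,y,x] \<and> x < y)"
  unfolding order_iso_def
  by (auto simp: less_Suc_eq numeral_3_eq_3 all_conj_distrib length_Suc_conv)

lemma order_iso_110: "order_iso u [1,1,0] \<longleftrightarrow> (\<exists>x z. u = [x,x,z] \<and> z < x)"
  unfolding order_iso_def
  by (auto simp: less_Suc_eq numeral_3_eq_3 all_conj_distrib length_Suc_conv)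

lemma contains_010_iff: "contains w [0,1,0] \<longleftrightarrow> (\<exists>x y. x < y \<and> subseq [x,y,x] w)"
  unfolding contains_def order_iso_010 by auto

lemma contains_110_iff: "contains w [1,1,0] \<longleftrightarrow> (\<exists>x z. z < x \<and> subseq [x,x,z] w)"
  unfolding contains_def order_iso_110 by auto

lemma contains_subseq: "contains u p \<Longrightarrow> subseq u w \<Longrightarrow> contains w p"
  unfolding contains_def using subseq_order.order_trans by metis

lemma contains_length: "contains w p \<Longrightarrow> length p \<le> length w"
  unfolding contains_def order_iso_def by (auto dest: list_emb_length)

lemma set_subseq: "subseq xs ys \<Longrightarrow> set xs \<subseteq> set ys"
  by (induct rule: list_emb.induct) auto

lemma subseq_pair_append:
  "subseq [x,y] (u @ v) \<longleftrightarrow> subseq [x,y] u \<or> (x \<in> set u \<and> y \<in> set v) \<or> subseq [x,y] v"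
proof -
  have "subseq ([x] @ [y]) (u @ v)" if "x \<in> set u" "y \<in> set v"
    using that by (intro list_emb_append_mono) (auto simp: subseq_singleton_left)
  then show ?thesis
    by (auto simp: subseq_append_iff append_eq_Cons_conv Cons_eq_append_conv subseq_singleton_left)
qed

lemma subseq_triple_append:
  "subseq [x,y,z] (u @ v) \<longleftrightarrow> subseq [x,y,z] u \<or> (subseq [x,y] u \<and> z \<in> set v)
     \<or> (x \<in> set u \<and> subseq [y,z] v) \<or> subseq [x,y,z] v"
proof -
  have "subseq ([x,y] @ [z]) (u @ v)" if "subseq [x,y] u" "z \<in> set v"
    using that by (intro list_emb_append_mono) (auto simp: subseq_singleton_left)
  moreover have "subseq ([x] @ [y,z]) (u @ v)" if "x \<in> set u" "subseq [y,z] v"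
    using that by (intro list_emb_append_mono) (auto simp: subseq_singleton_left)
  ultimately show ?thesis
    by (auto simp: subseq_append_iff append_eq_Cons_conv Cons_eq_append_conv subseq_singleton_left)
qed

lemma takeWhile_neq_append_Cons: "m \<notin> set g \<Longrightarrow> takeWhile (\<lambda>x. x \<noteq> m) (g @ m # r) = g"
  by (induction g) auto

lemma Max_append_max:
  assumes "set a \<subseteq> {..<m}" and "set b \<subseteq> {..m}"
  shows "Max (set (a @ m # b)) = m"
  using assms by (intro Max_eqI) auto

lemma append_max_eq_iff:
  fixes m m' :: "'a::linorder"
  assumes "set a \<subseteq> {..<m}" "set b \<subseteq> {..m}" "set a' \<subseteq> {..<m'}" "set b' \<subseteq> {..m'}"
  shows "a @ m # b = a' @ m' # b' \<longleftrightarrow> a = a' \<and> m = m' \<and> b = b'"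
proof
  assume eq: "a @ m # b = a' @ m' # b'"
  then have "m = m'" using Max_append_max[OF assms(1,2)] Max_append_max[OF assms(3,4)] by simp
  moreover have "m \<notin> set a" "m' \<notin> set a'" using assms(1,3) by auto
  ultimately have "a = a'" using eq by (metis takeWhile_neq_append_Cons)
  then show "a = a' \<and> m = m' \<and> b = b'" using eq \<open>m = m'\<close> by simp
qed simp

definition below_repeated :: "nat list \<Rightarrow> nat set" where
  "below_repeated w = {v. \<exists>x. v < x \<and> subseq [x,x] w}"

definition forbidden :: "nat list \<Rightarrow> nat set" where
  "forbidden w = set w \<union> below_repeated w"

definition avoids_010_110 :: "nat list \<Rightarrow> bool" where
  "avoids_010_110 w \<longleftrightarrow> avoids w [0,1,0] \<and> avoids w [1,1,0]"

lemma forbidden_lessThan: "set w \<subseteq> {..<c} \<Longrightarrow> forbidden w \<subseteq> {..<c}"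
  unfolding forbidden_def below_repeated_def by (auto dest!: set_subseq)

lemma finite_forbidden: "finite (forbidden w)"
proof -
  have "set w \<subseteq> {..<Suc (Max (set w))}" by (auto simp: le_imp_less_Suc)
  then show ?thesis by (rule finite_subset[OF forbidden_lessThan]) simp
qed

section \<open>Splitting at the first maximum\<close>

lemma contains_append_Cons:
  "contains a p \<Longrightarrow> contains (a @ m # b) p" "contains b p \<Longrightarrow> contains (a @ m # b) p"
proof -
  have "subseq a (a @ m # b)" "subseq b (a @ m # b)"
    by (simp_all add: subseq_rev_drop_many subseq_drop_many[of _ _ "a @ [m]", simplified])
  then show "contains a p \<Longrightarrow> contains (a @ m # b) p" "contains b p \<Longrightarrow> contains (a @ m # b) p"
    by (simp_all add: contains_subseq)
qed

lemma contains_010_append_max: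
  assumes a: "set a \<subseteq> {..<m}" and b: "set b \<subseteq> {..m}"
  shows "contains (a @ m # b) [0,1,0] \<longleftrightarrow>
    contains a [0,1,0] \<or> contains b [0,1,0] \<or> set a \<inter> set b \<noteq> {}"
proof
  assume "contains (a @ m # b) [0,1,0]"
  then obtain x y where "x < y" and xyx: "subseq [x,y,x] (a @ m # b)"
    unfolding contains_010_iff by blast
  from xyx consider "subseq [x,y,x] a" | "x \<in> set a" "x \<in> set (m # b)"
    | "subseq [x,y,x] (m # b)"
    unfolding subseq_triple_append by (auto simp del: subseq_Cons2_iff dest: set_subseq)
  then have "subseq [x,y,x] a \<or> subseq [x,y,x] b \<or> x \<in> set a \<inter> set b"
  proof cases
    case 2
    then show ?thesis using a by auto
  next
    case 3
    then show ?thesis using \<open>x < y\<close> b set_subseq[OF 3] by (cases "x = m") auto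
  qed simp
  then show "contains a [0,1,0] \<or> contains b [0,1,0] \<or> set a \<inter> set b \<noteq> {}"
    using \<open>x < y\<close> unfolding contains_010_iff by blast
next
  have "contains (a @ m # b) [0,1,0]" if "x \<in> set a" "x \<in> set b" for x
  proof -
    have "subseq ([x] @ [m,x]) (a @ m # b)"
      using that by (intro list_emb_append_mono) (auto simp: subseq_singleton_left)
    moreover have "x < m" using that a by auto
    ultimately show ?thesis unfolding contains_010_iff append.simps by blast
  qed
  then show "contains a [0,1,0] \<or> contains b [0,1,0] \<or> set a \<inter> set b \<noteq> {} \<Longrightarrow>
      contains (a @ m # b) [0,1,0]"
    using contains_append_Cons by blast
qed

lemma contains_110_below_repeated:
  assumes "v \<in> below_repeated u" and "v \<in> set w"
  shows "contains (u @ w) [1,1,0]"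
proof -
  obtain x where "v < x" and "subseq [x,x] u"
    using assms(1) unfolding below_repeated_def by blast
  moreover have "subseq [v] w" using assms(2) by (simp add: subseq_singleton_left)
  ultimately have "subseq ([x,x] @ [v]) (u @ w)" by (blast intro: list_emb_append_mono)
  then have "subseq [x,x,v] (u @ w)" by simp
  then show ?thesis using \<open>v < x\<close> unfolding contains_110_iff by blast
qed

lemma contains_110_append_max:
  assumes a: "set a \<subseteq> {..<m}" and b: "set b \<subseteq> {..m}" and disj: "set a \<inter> set b = {}"
  shows "contains (a @ m # b) [1,1,0] \<longleftrightarrow>
    contains a [1,1,0] \<or> contains b [1,1,0] \<or> below_repeated a \<inter> set b \<noteq> {} \<or>
    (\<exists>z. subseq [m,z] b \<and> z \<noteq> m)"
proof
  assume "contains (a @ m # b) [1,1,0]"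
  then obtain x z where "z < x" and xxz: "subseq [x,x,z] (a @ m # b)"
    unfolding contains_110_iff by blast
  from xxz consider "subseq [x,x,z] a" | "subseq [x,x] a" "z \<in> set (m # b)"
    | "x \<in> set a" "subseq [x,z] (m # b)" | "subseq [x,x,z] (m # b)"
    unfolding subseq_triple_append by blast
  then have "subseq [x,x,z] a \<or> subseq [x,x,z] b \<or> z \<in> below_repeated a \<inter> set b \<or>
      (subseq [m,z] b \<and> z \<noteq> m)"
  proof cases
    case 2
    then have "x < m" using a set_subseq[OF 2(1)] by auto
    then show ?thesis using 2 \<open>z < x\<close> unfolding below_repeated_def by auto
  next
    case 3
    then have "x \<noteq> m" using a by auto
    then have "x \<in> set b" using 3(2) set_subseq by fastforce
    then show ?thesis using 3(1) disj by auto
  next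
    case 4
    then show ?thesis using \<open>z < x\<close> by (cases "x = m") auto
  qed simp
  then show "contains a [1,1,0] \<or> contains b [1,1,0] \<or> below_repeated a \<inter> set b \<noteq> {} \<or>
      (\<exists>z. subseq [m,z] b \<and> z \<noteq> m)"
    using \<open>z < x\<close> unfolding contains_110_iff by blast
next
  have "contains (a @ m # b) [1,1,0]" if "v \<in> below_repeated a" "v \<in> set b" for v
    using contains_110_below_repeated[of v a "m # b"] that by simp
  moreover have "contains (a @ m # b) [1,1,0]" if "subseq [m,z] b" "z \<noteq> m" for z
  proof -
    have "z < m" using that b set_subseq[OF that(1)] by auto
    moreover have "subseq [m,m,z] (a @ m # b)"
      using that(1) by (intro subseq_drop_many) simp
    ultimately show ?thesis unfolding contains_110_iff by blast
  qed
  ultimately show "contains a [1,1,0] \<or> contains b [1,1,0] \<or> below_repeated a \<inter> set b \<noteq> {} \<or>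
      (\<exists>z. subseq [m,z] b \<and> z \<noteq> m) \<Longrightarrow> contains (a @ m # b) [1,1,0]"
    using contains_append_Cons by blast
qed

lemma avoids_010_110_append_max:
  assumes a: "set a \<subseteq> {..<m}" and b: "set b \<subseteq> {..m}"
  shows "avoids_010_110 (a @ m # b) \<longleftrightarrow>
    avoids_010_110 a \<and> avoids_010_110 b \<and> set b \<inter> forbidden a = {} \<and>
    (\<forall>z. subseq [m,z] b \<longrightarrow> z = m)"
proof (cases "set a \<inter> set b = {}")
  case True
  then show ?thesis
    using contains_010_append_max[OF a b] contains_110_append_max[OF a b True]
    unfolding avoids_010_110_def avoids_def forbidden_def by blast
next
  case False
  then show ?thesis
    using contains_010_append_max[OF a b] unfolding avoids_010_110_def avoids_def forbidden_def by blast
qed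

lemma forbidden_append_max_repeated:
  assumes a: "set a \<subseteq> {..<m}" and b: "set b \<subseteq> {..m}" and "m \<in> set b"
  shows "forbidden (a @ m # b) = {..m}"
proof
  have "set (a @ m # b) \<subseteq> {..<Suc m}" using a b by auto
  then show "forbidden (a @ m # b) \<subseteq> {..m}"
    unfolding lessThan_Suc_atMost[symmetric] by (rule forbidden_lessThan)
  have "subseq [m,m] (a @ m # b)"
    using \<open>m \<in> set b\<close> by (intro subseq_drop_many) (simp add: subseq_singleton_left)
  then show "{..m} \<subseteq> forbidden (a @ m # b)"
    unfolding forbidden_def below_repeated_def by (auto simp: le_less)
qed

lemma forbidden_append_max:
  assumes a: "set a \<subseteq> {..<m}" and b: "set b \<subseteq> {..<m}" and disj: "set a \<inter> set b = {}"
  shows "forbidden (a @ m # b) = forbidden a \<union> {m} \<union> forbidden b"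
proof -
  have "subseq [x,x] (a @ m # b) \<longleftrightarrow> subseq [x,x] a \<or> subseq [x,x] b" for x
  proof -
    have "x \<notin> set a \<or> x \<notin> set (m # b)" using a b disj by auto
    moreover have "m \<notin> set b" "\<not> subseq [m,m] b" using b set_subseq[of "[m,m]" b] by auto
    ultimately show ?thesis unfolding subseq_pair_append[of x x a "m # b"]
      by (cases "x = m") (auto simp: subseq_singleton_left)
  qed
  then show ?thesis unfolding forbidden_def below_repeated_def by auto
qed

lemma forbidden_value_iff:
  assumes "avoids_010_110 w" and w: "set w \<subseteq> {..<M}" and "v < M"
  shows "(\<exists>p\<in>P010_110. contains (w @ [M, v]) p) \<longleftrightarrow> v \<in> forbidden w"
proof -
  have v: "set [v] \<subseteq> {..M}" using \<open>v < M\<close> by simp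
  have short: "\<not> contains [v] p" if "p \<in> P010_110" for p
    using that contains_length[of "[v]" p] unfolding P010_110_def by auto
  have "\<not> subseq [M,z] [v]" for z using \<open>v < M\<close> by simp
  then show ?thesis
    using assms(1) contains_010_append_max[OF w v] contains_110_append_max[OF w v] short
    unfolding avoids_010_110_def avoids_def forbidden_def P010_110_def by auto
qed

lemma forb_eq_card_forbidden:
  assumes "avoids_010_110 w"
  shows "forb w P010_110 = card (forbidden w)"
proof (cases "w = []")
  case False
  define M where "M = Suc (Max (set w))"
  have w: "set w \<subseteq> {..<M}" unfolding M_def by (auto simp: le_imp_less_Suc)
  have "{v. v \<le> Max (set w) \<and> (\<exists>p\<in>P010_110. contains (w @ [M, v]) p)} = forbidden w"
    using forbidden_value_iff[OF assms w] forbidden_lessThan[OF w] unfolding M_def by (auto simp: less_Suc_eq_le)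
  then show ?thesis using False unfolding forb_def M_def by simp
qed (simp add: forb_def forbidden_def below_repeated_def)

lemma avoids_010_110_replicate: "avoids_010_110 (replicate t m)"
  unfolding avoids_010_110_def avoids_def contains_010_iff contains_110_iff
  by (auto dest!: set_subseq)

lemma avoids_010_110_append_replicate:
  assumes g: "set g \<subseteq> {..<m}"
  shows "avoids_010_110 (g @ replicate t m) \<longleftrightarrow> avoids_010_110 g"
proof (cases t)
  case (Suc s)
  have "set (replicate s m) \<inter> forbidden g = {}" using forbidden_lessThan[OF g] by auto
  moreover have "subseq [m,z] (replicate s m) \<Longrightarrow> z = m" for z by (auto dest!: set_subseq)
  moreover have "set (replicate s m) \<subseteq> {..m}" by auto
  ultimately show ?thesis
    using avoids_010_110_append_max[OF g, of "replicate s m"] avoids_010_110_replicate Suc by auto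
qed simp

lemma constant_tail_iff:
  "(\<forall>z. subseq [m,z] b \<longrightarrow> z = m) \<longleftrightarrow> (\<exists>g t. m \<notin> set g \<and> b = g @ replicate t m)"
proof
  show "\<forall>z. subseq [m,z] b \<longrightarrow> z = m \<Longrightarrow> \<exists>g t. m \<notin> set g \<and> b = g @ replicate t m"
  proof (induction b)
    case Nil
    show ?case by (intro exI[of _ "[]"] exI[of _ 0]) simp
  next
    case (Cons x b)
    show ?case
    proof (cases "x = m")
      case True
      then have "b = replicate (length b) m"
        using Cons.prems by (auto simp: subseq_singleton_left intro: replicate_length_same[symmetric])
      then show ?thesis using True by (intro exI[of _ "[]"] exI[of _ "Suc (length b)"]) simp
    next
      case False
      then obtain g t where "m \<notin> set g" "b = g @ replicate t m"
        using Cons by (auto intro: subseq_Cons')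
      then show ?thesis using False by (intro exI[of _ "x # g"] exI[of _ t]) simp
    qed
  qed
next
  assume "\<exists>g t. m \<notin> set g \<and> b = g @ replicate t m"
  then obtain g t where "m \<notin> set g" "b = g @ replicate t m" by blast
  then show "\<forall>z. subseq [m,z] b \<longrightarrow> z = m"
    using set_subseq[of "[m,_]" g] set_subseq[of "[m,_]" "replicate t m"]
    by (auto simp: subseq_pair_append)
qed

section \<open>Relabelling the alphabet\<close>

lemma subseq_map_right: "subseq xs (map f ys) \<Longrightarrow> \<exists>zs. subseq zs ys \<and> xs = map f zs"
proof (induction ys arbitrary: xs)
  case (Cons y ys)
  show ?case
  proof (cases xs)
    case (Cons x xs')
    show ?thesis
    proof (cases "x = f y")
      case True
      then obtain zs where "subseq zs ys" "xs' = map f zs" using Cons.IH Cons.prems \<open>xs = x # xs'\<close> by auto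
      then show ?thesis using True \<open>xs = x # xs'\<close> by (intro exI[of _ "y # zs"]) simp
    next
      case False
      then have "subseq xs (map f ys)" using Cons.prems \<open>xs = x # xs'\<close> by simp
      then obtain zs where "subseq zs ys" "xs = map f zs" using Cons.IH by blast
      then show ?thesis by (intro exI[of _ zs]) auto
    qed
  qed simp
qed auto

lemma order_iso_map:
  assumes "\<And>x y. x \<in> set u \<Longrightarrow> y \<in> set u \<Longrightarrow> r x < r y \<longleftrightarrow> x < y"
  shows "order_iso (map r u) p \<longleftrightarrow> order_iso u p"
  using assms unfolding order_iso_def by (auto simp: nth_map)

lemma contains_map_strict_mono:
  assumes "strict_mono_on S r" and "set w \<subseteq> S"
  shows "contains (map r w) p \<longleftrightarrow> contains w p"
proof
  assume "contains (map r w) p"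
  then obtain u where "subseq u (map r w)" "order_iso u p" unfolding contains_def by blast
  then obtain v where v: "subseq v w" "u = map r v" using subseq_map_right by blast
  moreover have "set v \<subseteq> S" using v(1) assms(2) set_subseq by blast
  ultimately have "order_iso v p"
    using \<open>order_iso u p\<close> order_iso_map[of v r] strict_mono_on_less[OF assms(1)] by blast
  with v(1) show "contains w p" unfolding contains_def by blast
next
  assume "contains w p"
  then obtain u where u: "subseq u w" "order_iso u p" unfolding contains_def by blast
  moreover have "set u \<subseteq> S" using u(1) assms(2) set_subseq by blast
  ultimately have "order_iso (map r u) p"
    using order_iso_map[of u r] strict_mono_on_less[OF assms(1)] by blast
  with u(1) show "contains (map r w) p" unfolding contains_def by (blast intro: subseq_map)
qed

lemma forbidden_map_strict_mono:
  assumes r: "strict_mono_on {..<c} r" and A: "r ` {..<c} = A" and w: "set w \<subseteq> {..<c}"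
  shows "forbidden (map r w) \<inter> A = r ` forbidden w"
proof -
  have less: "r x < r y \<longleftrightarrow> x < y" if "x < c" "y < c" for x y
    using strict_mono_on_less[OF r] that by simp
  have "v \<in> below_repeated (map r w) \<longleftrightarrow> (\<exists>u\<in>below_repeated w. v = r u)" if "v \<in> A" for v
  proof
    assume "v \<in> below_repeated (map r w)"
    then obtain x where "v < x" "subseq [x,x] (map r w)" unfolding below_repeated_def by blast
    then obtain y z where yz: "subseq [y,z] w" "r y = x" "r z = x"
      using subseq_map_right[of "[x,x]" r w] by (auto simp: map_eq_Cons_conv)
    then have "y < c" "z < c" using w set_subseq[OF yz(1)] by auto
    then have "y = z" using yz less by (metis less_irrefl linorder_neqE_nat)
    obtain u where "u < c" "v = r u" using \<open>v \<in> A\<close> A by auto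
    then have "u < y" using \<open>v < x\<close> yz \<open>y < c\<close> less by blast
    then show "\<exists>u\<in>below_repeated w. v = r u"
      using \<open>v = r u\<close> yz \<open>y = z\<close> unfolding below_repeated_def by blast
  next
    assume "\<exists>u\<in>below_repeated w. v = r u"
    then obtain u x where "v = r u" "u < x" "subseq [x,x] w" unfolding below_repeated_def by blast
    moreover have "x < c" using w set_subseq[OF \<open>subseq [x,x] w\<close>] by auto
    ultimately show "v \<in> below_repeated (map r w)"
      using less[of u x] subseq_map[of "[x,x]" w r] unfolding below_repeated_def by auto
  qed
  moreover have "r ` below_repeated w \<subseteq> A"
    using forbidden_lessThan[OF w] A unfolding forbidden_def by blast
  moreover have "r ` set w \<subseteq> A" using w A by blast
  ultimately show ?thesis unfolding forbidden_def by auto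
qed

lemma finite_set_enumeration:
  assumes "finite A"
  obtains r :: "nat \<Rightarrow> nat" where "strict_mono_on {..<card A} r" "r ` {..<card A} = A"
proof
  let ?r = "(!) (sorted_list_of_set A)"
  show "strict_mono_on {..<card A} ?r"
    by (rule strict_mono_onI) (auto intro: sorted_wrt_nth_less[OF strict_sorted_list_of_set])
  have "?r ` {..<card A} = set (sorted_list_of_set A)"
    by (auto simp: set_conv_nth)
  then show "?r ` {..<card A} = A" using assms by simp
qed

definition avoiding_words :: "nat \<Rightarrow> nat set \<Rightarrow> nat list set" where
  "avoiding_words L A = {w. length w = L \<and> set w \<subseteq> A \<and> avoids_010_110 w}"

lemma finite_avoiding_words:
  assumes "finite A" shows "finite (avoiding_words L A)"
  unfolding avoiding_words_def
  by (rule finite_subset[OF _ finite_lists_length_eq[OF assms, of L]]) auto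

lemma kk_eq_card: "kk L c = card (avoiding_words L {..<c})"
  unfolding kk_def avoiding_words_def avoids_010_110_def by simp

lemma jj_eq_card: "jj L c e = card {w \<in> avoiding_words L {..<c}. card (forbidden w) = e}"
  unfolding jj_def avoiding_words_def
  by (rule arg_cong[where f = card]) (auto simp: forb_eq_card_forbidden avoids_010_110_def)

lemma card_avoiding_words_relabel:
  assumes "finite A"
  shows "card {w \<in> avoiding_words L A. P (card (forbidden w \<inter> A))} =
    card {w \<in> avoiding_words L {..<card A}. P (card (forbidden w))}"
proof -
  obtain r where r: "strict_mono_on {..<card A} r" and A: "r ` {..<card A} = A"
    using finite_set_enumeration[OF assms] by blast
  have inj: "inj_on r {..<card A}" using r by (rule strict_mono_on_imp_inj_on)
  have "length (map r w) = L \<and> avoids_010_110 (map r w) \<and> P (card (forbidden (map r w) \<inter> A)) \<longleftrightarrow>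
      length w = L \<and> avoids_010_110 w \<and> P (card (forbidden w))"
    if "w \<in> lists {..<card A}" for w
  proof -
    have w: "set w \<subseteq> {..<card A}" using that by auto
    have "card (forbidden (map r w) \<inter> A) = card (forbidden w)"
      unfolding forbidden_map_strict_mono[OF r A w]
      using inj_on_subset[OF inj forbidden_lessThan[OF w]] by (rule card_image)
    then show ?thesis using contains_map_strict_mono[OF r w] unfolding avoids_010_110_def avoids_def by simp
  qed
  moreover have "bij_betw (map r) (lists {..<card A}) (lists A)"
    using bij_lists[of r "{..<card A}" A] inj A by (simp add: bij_betw_def)
  ultimately have "bij_betw (map r)
      {w \<in> lists {..<card A}. length w = L \<and> avoids_010_110 w \<and> P (card (forbidden w))}
      {w \<in> lists A. length w = L \<and> avoids_010_110 w \<and> P (card (forbidden w \<inter> A))}"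
    by (intro bij_betw_Collect) auto
  then show ?thesis
    unfolding avoiding_words_def lists_eq_set by (auto simp: conj_ac dest: bij_betw_same_card)
qed

lemma card_avoiding_words: "finite A \<Longrightarrow> card (avoiding_words L A) = kk L (card A)"
  using card_avoiding_words_relabel[of A L "\<lambda>_. True"] by (simp add: kk_eq_card)

lemma card_avoiding_words_forbidden:
  "finite A \<Longrightarrow> card {w \<in> avoiding_words L A. card (forbidden w \<inter> A) = e} = jj L (card A) e"
  using card_avoiding_words_relabel[of A L "\<lambda>i. i = e"] by (simp add: jj_eq_card)

section \<open>Counting by the first maximum\<close>

definition completions :: "nat \<Rightarrow> nat \<Rightarrow> nat \<Rightarrow> nat list \<Rightarrow> nat list set" where
  "completions L m f a = {b. length b = L \<and> set b \<subseteq> {..m} \<and>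
     avoids_010_110 (a @ m # b) \<and> card (forbidden (a @ m # b)) = f}"

lemma completions_without_max:
  assumes a: "set a \<subseteq> {..<m}" "avoids_010_110 a"
  defines "A \<equiv> {..<m} - forbidden a"
  shows "{b \<in> completions L m f a. m \<notin> set b} =
    {b \<in> avoiding_words L A. card (forbidden a) + 1 + card (forbidden b \<inter> A) = f}"
proof -
  have card: "card (forbidden (a @ m # b)) = card (forbidden a) + 1 + card (forbidden b \<inter> A)"
    if b: "set b \<subseteq> A" for b
  proof -
    have "set b \<subseteq> {..<m}" "set a \<inter> set b = {}" using b unfolding A_def forbidden_def by auto
    then have "forbidden (a @ m # b) = forbidden a \<union> ({m} \<union> (forbidden b \<inter> A))"
      using forbidden_append_max[OF a(1)] forbidden_lessThan unfolding A_def by blast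
    moreover have "m \<notin> forbidden a" "m \<notin> A" using forbidden_lessThan[OF a(1)] unfolding A_def by auto
    ultimately show ?thesis using finite_forbidden unfolding A_def
      by (simp add: card_Un_disjoint Int_Diff disjoint_iff)
  qed
  have iff: "set b \<subseteq> {..m} \<and> m \<notin> set b \<and> avoids_010_110 (a @ m # b) \<longleftrightarrow>
      set b \<subseteq> A \<and> avoids_010_110 b" for b
  proof (cases "set b \<subseteq> {..m} \<and> m \<notin> set b")
    case True
    then have "\<not> subseq [m,z] b" for z using set_subseq[of "[m,z]" b] by auto
    then show ?thesis using True avoids_010_110_append_max[OF a(1), of b] a(2)
      unfolding A_def by (auto simp: less_le)
  qed (auto simp: A_def)
  show ?thesis
  proof (intro set_eqI)
    fix b show "b \<in> {b \<in> completions L m f a. m \<notin> set b} \<longleftrightarrow>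
        b \<in> {b \<in> avoiding_words L A. card (forbidden a) + 1 + card (forbidden b \<inter> A) = f}"
      using iff[of b] card[of b] unfolding completions_def avoiding_words_def by auto
  qed
qed

lemma completions_with_max_iff:
  assumes a: "set a \<subseteq> {..<m}" "avoids_010_110 a"
  defines "A \<equiv> {..<m} - forbidden a"
  shows "b \<in> completions L m f a \<and> m \<in> set b \<longleftrightarrow> f = m + 1 \<and>
    (\<exists>g. set g \<subseteq> A \<and> avoids_010_110 g \<and> length g < L \<and> b = g @ replicate (L - length g) m)"
proof
  assume b: "b \<in> completions L m f a \<and> m \<in> set b"
  then have bm: "set b \<subseteq> {..m}" "avoids_010_110 (a @ m # b)" "m \<in> set b" "length b = L"
    unfolding completions_def by auto
  have f: "f = m + 1"
    using b forbidden_append_max_repeated[OF a(1) bm(1,3)] unfolding completions_def by simp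
  have tail: "avoids_010_110 b" "set b \<inter> forbidden a = {}" "\<forall>z. subseq [m,z] b \<longrightarrow> z = m"
    using avoids_010_110_append_max[OF a(1) bm(1)] bm(2) by auto
  obtain g t where g: "m \<notin> set g" "b = g @ replicate t m"
    using tail(3) unfolding constant_tail_iff by blast
  have "set g \<subseteq> set b" using g(2) by simp
  then have "set g \<subseteq> A" using bm(1) g(1) tail(2) unfolding A_def by (force simp: less_le)
  moreover have "t \<noteq> 0" using g bm(3) by (cases t) auto
  moreover have "avoids_010_110 g"
    using tail(1) g(2) avoids_010_110_append_replicate[of g m t] \<open>set g \<subseteq> A\<close> unfolding A_def by blast
  ultimately show "f = m + 1 \<and>
    (\<exists>g. set g \<subseteq> A \<and> avoids_010_110 g \<and> length g < L \<and> b = g @ replicate (L - length g) m)"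
    using f g bm(4) by (intro conjI exI[of _ g]) auto
next
  assume "f = m + 1 \<and>
    (\<exists>g. set g \<subseteq> A \<and> avoids_010_110 g \<and> length g < L \<and> b = g @ replicate (L - length g) m)"
  then obtain g where f: "f = m + 1" and g: "set g \<subseteq> A" "avoids_010_110 g" "length g < L"
    and b: "b = g @ replicate (L - length g) m" by blast
  have gm: "set g \<subseteq> {..<m}" using g(1) unfolding A_def by blast
  have bm: "set b \<subseteq> {..m}" "m \<in> set b" using b gm g(3) by auto
  have "m \<notin> set g" using gm by blast
  then have "\<forall>z. subseq [m,z] b \<longrightarrow> z = m" unfolding constant_tail_iff b by blast
  moreover have "set b \<inter> forbidden a = {}"
    using b g(1) forbidden_lessThan[OF a(1)] unfolding A_def by auto
  moreover have "avoids_010_110 b" using avoids_010_110_append_replicate[OF gm] g(2) b by simp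
  ultimately have "avoids_010_110 (a @ m # b)"
    using avoids_010_110_append_max[OF a(1) bm(1)] a(2) by blast
  then show "b \<in> completions L m f a \<and> m \<in> set b"
    using bm f b g(3) forbidden_append_max_repeated[OF a(1) bm] unfolding completions_def by simp
qed

lemma completions_with_max:
  assumes a: "set a \<subseteq> {..<m}" "avoids_010_110 a"
  defines "A \<equiv> {..<m} - forbidden a"
  shows "{b \<in> completions L m f a. m \<in> set b} =
    (if f = m + 1 then (\<lambda>(l, g). g @ replicate (L - l) m) ` (SIGMA l:{..<L}. avoiding_words l A)
     else {})"
proof (intro set_eqI)
  fix b
  show "b \<in> {b \<in> completions L m f a. m \<in> set b} \<longleftrightarrow> b \<in> (if f = m + 1 then
      (\<lambda>(l, g). g @ replicate (L - l) m) ` (SIGMA l:{..<L}. avoiding_words l A) else {})"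
    using completions_with_max_iff[OF a, of b L f] unfolding image_iff avoiding_words_def A_def by auto
qed

lemma append_replicate_eqD:
  assumes "m \<notin> set g" "m \<notin> set g'" "s \<noteq> 0" "s' \<noteq> 0"
    and "g @ replicate s m = g' @ replicate s' m"
  shows "g = g'"
proof -
  obtain r r' where "s = Suc r" "s' = Suc r'" using assms(3,4) by (metis not0_implies_Suc)
  then have "g @ m # replicate r m = g' @ m # replicate r' m" using assms(5) by simp
  then show ?thesis using assms(1,2) by (metis takeWhile_neq_append_Cons)
qed

lemma inj_on_append_replicate:
  "inj_on (\<lambda>(l, g). g @ replicate (L - l) m) {(l, g). l < L \<and> length g = l \<and> m \<notin> set g}"
proof (rule inj_onI)
  fix x y
  assume "x \<in> {(l, g). l < L \<and> length g = l \<and> m \<notin> set g}"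
    "y \<in> {(l, g). l < L \<and> length g = l \<and> m \<notin> set g}"
    and eq: "(\<lambda>(l, g). g @ replicate (L - l) m) x = (\<lambda>(l, g). g @ replicate (L - l) m) y"
  then obtain g g' where xy: "x = (length g, g)" "y = (length g', g')"
    and "length g < L" "length g' < L" "m \<notin> set g" "m \<notin> set g'" by auto
  then have "g = g'" using eq append_replicate_eqD[of m g g' "L - length g" "L - length g'"] by simp
  then show "x = y" using xy by simp
qed

lemma finite_completions: "finite (completions L m f a)"
  unfolding completions_def
  by (rule finite_subset[OF _ finite_lists_length_eq[of "{..m}" L]]) auto

lemma card_completions:
  assumes a: "set a \<subseteq> {..<m}" "avoids_010_110 a"
  defines "i \<equiv> card (forbidden a)"
  shows "card (completions L m f a) = (if i < f then
    jj L (m - i) (f - i - 1) + (if f = m + 1 then 1 else 0) * (\<Sum>l<L. kk l (m - i)) else 0)"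
proof -
  define A where "A = {..<m} - forbidden a"
  have Fa: "forbidden a \<subseteq> {..<m}" using forbidden_lessThan[OF a(1)] .
  then have cardA: "card A = m - i" unfolding A_def i_def by (simp add: card_Diff_subset finite_forbidden)
  have "i \<le> m" using card_mono[OF _ Fa] unfolding i_def by simp
  have "{b \<in> avoiding_words L A. i + 1 + card (forbidden b \<inter> A) = f} =
      (if i < f then {b \<in> avoiding_words L A. card (forbidden b \<inter> A) = f - i - 1} else {})"
    by auto
  then have without_max: "card {b \<in> completions L m f a. m \<notin> set b} =
      (if i < f then jj L (m - i) (f - i - 1) else 0)"
    using completions_without_max[OF a, of L f] card_avoiding_words_forbidden[of A L] cardA
    unfolding A_def i_def by simp
  have "inj_on (\<lambda>(l, g). g @ replicate (L - l) m) (SIGMA l:{..<L}. avoiding_words l A)"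
    by (rule inj_on_subset[OF inj_on_append_replicate]) (auto simp: avoiding_words_def A_def)
  then have with_max: "card {b \<in> completions L m f a. m \<in> set b} =
      (if f = m + 1 then \<Sum>l<L. kk l (m - i) else 0)"
    using completions_with_max[OF a, of L f] card_avoiding_words[of A] cardA
    unfolding A_def[symmetric] by (simp add: card_image finite_avoiding_words A_def)
  have "card (completions L m f a) =
      card {b \<in> completions L m f a. m \<notin> set b} + card {b \<in> completions L m f a. m \<in> set b}"
    using finite_completions by (subst card_Un_disjoint[symmetric]) (auto intro: arg_cong[where f = card])
  then show ?thesis using without_max with_max \<open>i \<le> m\<close> by auto
qed

lemma sum_card_completions:
  "(\<Sum>a\<in>avoiding_words p {..<m}. card (completions L m f a)) =
    (\<Sum>i<f. jj p m i *
       (jj L (m - i) (f - i - 1) + (if f = m + 1 then 1 else 0) * (\<Sum>l<L. kk l (m - i))))"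
proof -
  let ?S = "avoiding_words p {..<m}"
  define Y where "Y i = jj L (m - i) (f - i - 1) + (if f = m + 1 then 1 else 0) * (\<Sum>l<L. kk l (m - i))"
    for i
  have "card (completions L m f a) = (\<Sum>i<f. if card (forbidden a) = i then Y i else 0)"
    if "a \<in> ?S" for a
    using that card_completions[of a m L f] unfolding avoiding_words_def Y_def by (simp add: sum.delta')
  then have "(\<Sum>a\<in>?S. card (completions L m f a)) =
      (\<Sum>a\<in>?S. \<Sum>i<f. if card (forbidden a) = i then Y i else 0)"
    by (rule sum.cong[OF refl])
  also have "\<dots> = (\<Sum>i<f. \<Sum>a\<in>?S. if card (forbidden a) = i then Y i else 0)"
    by (rule sum.swap)
  also have "\<dots> = (\<Sum>i<f. jj p m i * Y i)"
  proof (rule sum.cong[OF refl])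
    fix i
    have "(\<Sum>a\<in>?S. if card (forbidden a) = i then Y i else 0) =
        (\<Sum>a\<in>{a \<in> ?S. card (forbidden a) = i}. Y i)"
      by (rule sum.inter_filter[symmetric]) (simp add: finite_avoiding_words)
    then show "(\<Sum>a\<in>?S. if card (forbidden a) = i then Y i else 0) = jj p m i * Y i"
      by (simp add: jj_eq_card)
  qed
  finally show ?thesis unfolding Y_def .
qed

lemma split_at_first_max:
  assumes "w \<noteq> []"
  obtains a b where "w = a @ Max (set w) # b" "set a \<subseteq> {..<Max (set w)}" "set b \<subseteq> {..Max (set w)}"
proof -
  let ?m = "Max (set w)"
  obtain a b where w: "w = a @ ?m # b" "?m \<notin> set a"
    using split_list_first[of ?m w] assms by auto
  have "set a \<subseteq> set w" "set b \<subseteq> set w" using arg_cong[OF w(1), of set] by auto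
  then have "set a \<subseteq> {..<?m}" "set b \<subseteq> {..?m}" using w(2) by (auto simp: less_le)
  with w(1) show thesis by (rule that)
qed

lemma avoiding_words_first_max_decomposition:
  assumes "n \<ge> 1"
  shows "bij_betw (\<lambda>(p, m, a, b). a @ m # b)
    (SIGMA p:{1..n}. SIGMA m:{..<k}. SIGMA a:avoiding_words (p - 1) {..<m}. completions (n - p) m f a)
    {w \<in> avoiding_words n {..<k}. card (forbidden w) = f}"
proof (rule bij_betw_imageI)
  show "inj_on (\<lambda>(p, m, a, b). a @ m # b)
    (SIGMA p:{1..n}. SIGMA m:{..<k}. SIGMA a:avoiding_words (p - 1) {..<m}. completions (n - p) m f a)"
    by (rule inj_onI, clarify)
      (auto simp: append_max_eq_iff avoiding_words_def completions_def)
  show "(\<lambda>(p, m, a, b). a @ m # b) `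
    (SIGMA p:{1..n}. SIGMA m:{..<k}. SIGMA a:avoiding_words (p - 1) {..<m}. completions (n - p) m f a) =
    {w \<in> avoiding_words n {..<k}. card (forbidden w) = f}"
  proof (intro set_eqI iffI)
    fix w assume "w \<in> (\<lambda>(p, m, a, b). a @ m # b) `
      (SIGMA p:{1..n}. SIGMA m:{..<k}. SIGMA a:avoiding_words (p - 1) {..<m}. completions (n - p) m f a)"
    then show "w \<in> {w \<in> avoiding_words n {..<k}. card (forbidden w) = f}"
      unfolding avoiding_words_def completions_def by (auto simp: subset_eq; meson le_less_trans less_trans)
  next
    fix w assume w: "w \<in> {w \<in> avoiding_words n {..<k}. card (forbidden w) = f}"
    then have "w \<noteq> []" using assms unfolding avoiding_words_def by auto
    define m where "m = Max (set w)"
    obtain a b where ab: "w = a @ m # b" "set a \<subseteq> {..<m}" "set b \<subseteq> {..m}"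
      using split_at_first_max[OF \<open>w \<noteq> []\<close>] unfolding m_def by blast
    have "m < k" using w ab(1) unfolding avoiding_words_def by auto
    moreover have "avoids_010_110 a"
      using w avoids_010_110_append_max[OF ab(2,3)] ab(1) unfolding avoiding_words_def by auto
    moreover have "Suc (length a) \<in> {1..n}" using w ab(1) unfolding avoiding_words_def by auto
    ultimately have "(Suc (length a), m, a, b) \<in>
      (SIGMA p:{1..n}. SIGMA m:{..<k}. SIGMA a:avoiding_words (p - 1) {..<m}. completions (n - p) m f a)"
      using w ab unfolding avoiding_words_def completions_def by auto
    then show "w \<in> (\<lambda>(p, m, a, b). a @ m # b) `
      (SIGMA p:{1..n}. SIGMA m:{..<k}. SIGMA a:avoiding_words (p - 1) {..<m}. completions (n - p) m f a)"
      unfolding ab(1) by (rule rev_image_eqI) simp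
  qed
qed

theorem mainTheorem12:
  fixes n k f :: nat
  assumes "n \<ge> 1"
  shows "jj n k f =
    (\<Sum>p=1..n. \<Sum>i<f. \<Sum>m<k.
       jj (p - 1) m i *
       (jj (n - p) (m - i) (f - i - 1) +
        (if f = m + 1 then 1 else 0) * (\<Sum>l<n - p. kk l (m - i))))"
proof -
  have "jj n k f = card {w \<in> avoiding_words n {..<k}. card (forbidden w) = f}"
    by (rule jj_eq_card)
  also have "\<dots> = card
      (SIGMA p:{1..n}. SIGMA m:{..<k}. SIGMA a:avoiding_words (p - 1) {..<m}. completions (n - p) m f a)"
    using avoiding_words_first_max_decomposition[OF assms] by (rule bij_betw_same_card[symmetric])
  also have "\<dots> = (\<Sum>p=1..n. \<Sum>m<k. \<Sum>a\<in>avoiding_words (p - 1) {..<m}. card (completions (n - p) m f a))"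
    by (simp add: finite_avoiding_words finite_completions)
  also have "\<dots> = (\<Sum>p=1..n. \<Sum>m<k. \<Sum>i<f. jj (p - 1) m i *
       (jj (n - p) (m - i) (f - i - 1) + (if f = m + 1 then 1 else 0) * (\<Sum>l<n - p. kk l (m - i))))"
    by (simp only: sum_card_completions)
  also have "\<dots> = (\<Sum>p=1..n. \<Sum>i<f. \<Sum>m<k. jj (p - 1) m i *
       (jj (n - p) (m - i) (f - i - 1) + (if f = m + 1 then 1 else 0) * (\<Sum>l<n - p. kk l (m - i))))"
    by (simp only: sum.swap[of _ "{..<k}"])
  finally show ?thesis .
qed
end
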